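(* Let $\mathcal{X}$ be a finite set of actions, $\mathcal{Y}$ a finite set of responses, $\mathcal{H}\subseteq\mathcal{Y}^{\mathcal{X}}$, $\mathrm{cost}:\mathcal{X}\times\mathcal{Y}\to\mathbb{R}_+$, $Q>0$, and let $f:2^{\mathcal{X}\times\mathcal{Y}}\to\mathbb{R}_+$ be a learning objective for $\mathcal{H}$. If there exists an optimal algorithm for $f$ (and $Q$, $\mathcal{H}$), then there exists a bifurcating optimal algorithm for $f,\mathcal{H}$.
   Context: The true state is an unknown $h^*\in\mathcal{H}$. An interactive algorithm $\mathcal{A}$, given the set $S\subseteq\mathcal{X}\times\mathcal{Y}$ of pairs observed so far, outputs either an action $\mathcal{A}(S)\in\mathcal{X}$ (yielding the pair $(x,h^*(x))$, which is added to $S$) or terminates. $S^h_t[\mathcal{A}]$ is the set of pairs collected in the first $t$ iterations and $S^h[\mathcal{A}]$ the set collected until termination, when $h^*=h$. $\mathrm{cost}(S)=\sum_{(x,y)\in S}\mathrm{cost}(x,y)$, $\mathrm{cost}(\mathcal{A})=\max_{h\in\mathcal{H}}\mathrm{cost}(S^h[\mathcal{A}])$. An optimal algorithm is an interactive algorithm with $f(S^h[\mathcal{A}])\ge Q$ for all $h\in\mathcal{H}$ whose cost $\mathrm{cost}(\mathcal{A})$ equals the minimum of $\mathrm{cost}$ over all such algorithms. Version space $V(S)=\{h\in\mathcal{H}\mid \forall(x,y)\in S,\ y=h(x)\}$. $f$ is a learning objective for $\mathcal{H}$ if $f(S)=g(V(S))$ for some monotone non-increasing $g$. Let $\mathcal{Y}(x,S):=\{h(x)\mid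 h\in V(S)\}$. $\mathcal{A}$ is bifurcating for $\mathcal{H}$ if for all $t$ and $h\in\mathcal{H}$ (at which $\mathcal{A}$ selects an action), $|\mathcal{Y}(\mathcal{A}(S^h_t[\mathcal{A}]),S^h_t[\mathcal{A}])|\ge 2$. *)

theory Defs
  imports Complex_Main
begin

text \<open>Actions are elements of the finite type 'x, responses of the finite type 'y.
  An interactive algorithm maps the set of observed pairs to either an action
  (Some x) or termination (None).\<close>

type_synonym ('x, 'y) alg = "('x \<times> 'y) set \<Rightarrow> 'x option"

fun run :: "('x, 'y) alg \<Rightarrow> ('x \<Rightarrow> 'y) \<Rightarrow> nat \<Rightarrow> ('x \<times> 'y) set" where
  "run A h 0 = {}"
| "run A h (Suc t) = (case A (run A h t) of
       None \<Rightarrow> run A h t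
     | Some x \<Rightarrow> insert (x, h x) (run A h t))"

definition terminates :: "('x, 'y) alg \<Rightarrow> ('x \<Rightarrow> 'y) \<Rightarrow> bool" where
  "terminates A h \<longleftrightarrow> (\<exists>t. A (run A h t) = None)"

definition final :: "('x, 'y) alg \<Rightarrow> ('x \<Rightarrow> 'y) \<Rightarrow> ('x \<times> 'y) set" where
  "final A h = run A h (LEAST t. A (run A h t) = None)"

definition cost_set :: "('x \<Rightarrow> 'y \<Rightarrow> real) \<Rightarrow> ('x \<times> 'y) set \<Rightarrow> real" where
  "cost_set c S = (\<Sum>(x, y)\<in>S. c x y)"

definition alg_cost :: "('x \<Rightarrow> 'y \<Rightarrow> real) \<Rightarrow> ('x \<Rightarrow> 'y) set \<Rightarrow> ('x, 'y) alg \<Rightarrow> real" where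
  "alg_cost c H A = Max ((\<lambda>h. cost_set c (final A h)) ` H)"

definition version_space :: "('x \<Rightarrow> 'y) set \<Rightarrow> ('x \<times> 'y) set \<Rightarrow> ('x \<Rightarrow> 'y) set" where
  "version_space H S = {h \<in> H. \<forall>(x, y)\<in>S. y = h x}"

definition resp_set :: "('x \<Rightarrow> 'y) set \<Rightarrow> 'x \<Rightarrow> ('x \<times> 'y) set \<Rightarrow> 'y set" where
  "resp_set H x S = (\<lambda>h. h x) ` version_space H S"

definition learning_objective :: "(('x \<times> 'y) set \<Rightarrow> real) \<Rightarrow> ('x \<Rightarrow> 'y) set \<Rightarrow> bool" where
  "learning_objective f H \<longleftrightarrow>
     (\<exists>g :: ('x \<Rightarrow> 'y) set \<Rightarrow> real.
        (\<forall>V1 V2. V1 \<subseteq> V2 \<longrightarrow> V2 \<subseteq> H \<longrightarrow> g V2 \<le> g V1) \<and>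
        (\<forall>S. f S = g (version_space H S)))"

definition achieves :: "(('x \<times> 'y) set \<Rightarrow> real) \<Rightarrow> real \<Rightarrow> ('x \<Rightarrow> 'y) set \<Rightarrow> ('x, 'y) alg \<Rightarrow> bool" where
  "achieves f Q H A \<longleftrightarrow> (\<forall>h\<in>H. terminates A h \<and> f (final A h) \<ge> Q)"

definition optimal_alg ::
  "('x \<Rightarrow> 'y \<Rightarrow> real) \<Rightarrow> (('x \<times> 'y) set \<Rightarrow> real) \<Rightarrow> real \<Rightarrow> ('x \<Rightarrow> 'y) set \<Rightarrow> ('x, 'y) alg \<Rightarrow> bool" where
  "optimal_alg c f Q H A \<longleftrightarrow>
     achieves f Q H A \<and> (\<forall>B. achieves f Q H B \<longrightarrow> alg_cost c H A \<le> alg_cost c H B)"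

definition bifurcating :: "('x \<Rightarrow> 'y) set \<Rightarrow> ('x, 'y) alg \<Rightarrow> bool" where
  "bifurcating H A \<longleftrightarrow>
     (\<forall>t. \<forall>h\<in>H. \<forall>x. A (run A h t) = Some x \<longrightarrow> card (resp_set H x (run A h t)) \<ge> 2)"

end

theory Submission
  imports Defs
begin

text \<open>Given an optimal algorithm A, the bifurcating algorithm, on observations S, simulates A on
  an arbitrary hypothesis consistent with S and skips every action whose response is already
  determined: actions with a single possible response in A's current version space, and actions
  whose pair is already in S. Up to the first action that is not skipped, the simulation does not
  depend on which consistent hypothesis was chosen, so the new algorithm is well defined. For every
  h it collects a subset of the pairs A collects (hence it is no more costly) with the same final
  version space (hence it reaches the same value of the learning objective), and by construction
  every action it takes has at least two possible responses.\<close>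

lemma run_mono: "s \<le> t \<Longrightarrow> run A h s \<subseteq> run A h t"
  by (rule lift_Suc_mono_le[of "run A h"]) (auto split: option.splits)

lemma run_consistent: "(x, y) \<in> run A h t \<Longrightarrow> y = h x"
  by (induction t) (auto split: option.splits)

lemma run_stable: "A (run A h t) = None \<Longrightarrow> run A h (t + k) = run A h t"
  by (induction k) auto

lemma final_eq_run:
  assumes "A (run A h t) = None"
  shows "final A h = run A h t"
proof -
  define m where "m = (LEAST t. A (run A h t) = None)"
  have "A (run A h m) = None" "m \<le> t"
    unfolding m_def using assms by (auto intro: LeastI Least_le)
  then have "run A h t = run A h m"
    using run_stable[of A h m "t - m"] by simp
  then show ?thesis
    unfolding final_def m_def by simp
qed

lemma version_space_antimono: "S \<subseteq> T \<Longrightarrow> version_space H T \<subseteq> version_space H S"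
  unfolding version_space_def by blast

lemma resp_set_antimono: "S \<subseteq> T \<Longrightarrow> resp_set H x T \<subseteq> resp_set H x S"
  unfolding resp_set_def using version_space_antimono by blast

lemma in_version_space_run: "h \<in> H \<Longrightarrow> h \<in> version_space H (run A h t)"
  unfolding version_space_def using run_consistent by fastforce

lemma response_determined:
  fixes H :: "('x \<Rightarrow> 'y::finite) set"
  assumes "card (resp_set H x S) < 2" "h \<in> version_space H S" "h' \<in> version_space H S"
  shows "h' x = h x"
proof -
  have "h x \<in> resp_set H x S" "h' x \<in> resp_set H x S"
    using assms(2,3) unfolding resp_set_def by auto
  then show ?thesis
    using assms(1) card_le_Suc0_iff_eq[of "resp_set H x S"] by auto
qed

definition bif_stop :: "('x, 'y) alg \<Rightarrow> ('x \<Rightarrow> 'y) set \<Rightarrow> ('x \<Rightarrow> 'y) \<Rightarrow> ('x \<times> 'y) set \<Rightarrow> nat \<Rightarrow> bool"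
  where "bif_stop A H h S t \<longleftrightarrow> (case A (run A h t) of
      None \<Rightarrow> True
    | Some x \<Rightarrow> 2 \<le> card (resp_set H x (run A h t)) \<and> (x, h x) \<notin> S)"

definition bif_time :: "('x, 'y) alg \<Rightarrow> ('x \<Rightarrow> 'y) set \<Rightarrow> ('x \<Rightarrow> 'y) \<Rightarrow> ('x \<times> 'y) set \<Rightarrow> nat"
  where "bif_time A H h S = (LEAST t. bif_stop A H h S t)"

definition bifurcate :: "('x, 'y) alg \<Rightarrow> ('x \<Rightarrow> 'y) set \<Rightarrow> ('x, 'y) alg"
  where "bifurcate A H S = (if version_space H S = {} then None
     else let h = (SOME h. h \<in> version_space H S) in A (run A h (bif_time A H h S)))"

lemma bif_stop_bif_time:
  assumes "terminates A h"
  shows "bif_stop A H h S (bif_time A H h S)"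
proof -
  obtain t where "A (run A h t) = None"
    using assms unfolding terminates_def by blast
  then have "bif_stop A H h S t"
    unfolding bif_stop_def by simp
  then show ?thesis
    unfolding bif_time_def by (rule LeastI)
qed

lemma not_bif_stop_before: "s < bif_time A H h S \<Longrightarrow> \<not> bif_stop A H h S s"
  unfolding bif_time_def by (rule not_less_Least)

lemma bif_time_le_termination: "A (run A h t) = None \<Longrightarrow> bif_time A H h S \<le> t"
  unfolding bif_time_def by (rule Least_le) (simp add: bif_stop_def)

lemma bif_stop_antimono: "bif_stop A H h T s \<Longrightarrow> S \<subseteq> T \<Longrightarrow> bif_stop A H h S s"
  unfolding bif_stop_def by (auto split: option.splits)

text \<open>Every action skipped before the stopping time has a response fixed by S, so any other
  hypothesis consistent with S stays in the version space of A's run on h.\<close>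
lemma run_eq_before_bif_time:
  fixes H :: "('x \<Rightarrow> 'y::finite) set"
  assumes h: "h \<in> version_space H S" and h': "h' \<in> version_space H S"
    and "s \<le> bif_time A H h S"
  shows "run A h' s = run A h s"
proof -
  have "s \<le> bif_time A H h S \<longrightarrow> run A h' s = run A h s \<and> h' \<in> version_space H (run A h s)"
  proof (induction s)
    case 0
    then show ?case using h' by (simp add: version_space_def)
  next
    case (Suc s)
    show ?case
    proof
      assume "Suc s \<le> bif_time A H h S"
      then have eq: "run A h' s = run A h s" and h'_run: "h' \<in> version_space H (run A h s)"
        and no_stop: "\<not> bif_stop A H h S s"
        using Suc not_bif_stop_before[of s A H h S] by auto
      then obtain x where x: "A (run A h s) = Some x"
        unfolding bif_stop_def by (auto split: option.splits)
      have "h' x = h x"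
      proof (cases "2 \<le> card (resp_set H x (run A h s))")
        case True
        then have "(x, h x) \<in> S" using no_stop x unfolding bif_stop_def by simp
        then show ?thesis using h' unfolding version_space_def by auto
      next
        case False
        have "h \<in> H" using h unfolding version_space_def by simp
        then show ?thesis
          using False response_determined in_version_space_run h'_run by (metis not_le)
      qed
      then show "run A h' (Suc s) = run A h (Suc s) \<and> h' \<in> version_space H (run A h (Suc s))"
        using eq h'_run x by (auto simp: version_space_def)
    qed
  qed
  then show ?thesis using assms(3) by blast
qed

lemma bif_time_eq:
  fixes H :: "('x \<Rightarrow> 'y::finite) set"
  assumes h: "h \<in> version_space H S" and h': "h' \<in> version_space H S" and "terminates A h"
  shows "bif_time A H h' S = bif_time A H h S"
proof -
  have same_stop: "bif_stop A H h' S s = bif_stop A H h S s" if "s \<le> bif_time A H h S" for s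
  proof -
    have "(x, h' x) \<in> S \<longleftrightarrow> (x, h x) \<in> S" for x
      using h h' unfolding version_space_def by auto
    then show ?thesis
      using run_eq_before_bif_time[OF h h' that] unfolding bif_stop_def by (simp split: option.splits)
  qed
  show ?thesis
    unfolding bif_time_def[of A H h']
  proof (rule Least_equality)
    show "bif_stop A H h' S (bif_time A H h S)"
      using same_stop bif_stop_bif_time[OF assms(3)] by simp
  next
    fix s assume "bif_stop A H h' S s"
    then show "bif_time A H h S \<le> s"
      using same_stop[of s] not_bif_stop_before[of s A H h S] by fastforce
  qed
qed

lemma bifurcate_eq:
  fixes H :: "('x \<Rightarrow> 'y::finite) set"
  assumes h: "h \<in> version_space H S" and "terminates A h"
  shows "bifurcate A H S = A (run A h (bif_time A H h S))"
proof -
  define h' where "h' = (SOME h. h \<in> version_space H S)"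
  have h': "h' \<in> version_space H S"
    using h unfolding h'_def by (auto simp: some_in_eq)
  have "run A h' (bif_time A H h' S) = run A h (bif_time A H h S)"
    using bif_time_eq[OF h h' assms(2)] run_eq_before_bif_time[OF h h'] by simp
  then show ?thesis
    using h unfolding bifurcate_def h'_def[symmetric] by auto
qed

context
  fixes A :: "('x, 'y::finite) alg" and H :: "('x \<Rightarrow> 'y) set" and h :: "'x \<Rightarrow> 'y"
  assumes h_in_H: "h \<in> H" and terminates_A: "terminates A h"
begin

lemma bifurcate_step:
  "bifurcate A H (run (bifurcate A H) h t)
     = A (run A h (bif_time A H h (run (bifurcate A H) h t)))"
  using bifurcate_eq[OF in_version_space_run[OF h_in_H] terminates_A] .

lemma bif_time_increasing:
  assumes step: "bifurcate A H (run (bifurcate A H) h t) = Some x"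
  shows "bif_time A H h (run (bifurcate A H) h t) < bif_time A H h (run (bifurcate A H) h (Suc t))"
    (is "?\<tau> < ?\<tau>'")
proof (rule ccontr)
  assume "\<not> ?\<tau> < ?\<tau>'"
  moreover have "run (bifurcate A H) h (Suc t) = insert (x, h x) (run (bifurcate A H) h t)"
    using step by simp
  moreover have "bif_stop A H h (run (bifurcate A H) h (Suc t)) ?\<tau>'"
    using bif_stop_bif_time[OF terminates_A] .
  ultimately consider "?\<tau>' = ?\<tau>" "bif_stop A H h (insert (x, h x) (run (bifurcate A H) h t)) ?\<tau>"
    | "?\<tau>' < ?\<tau>" "bif_stop A H h (run (bifurcate A H) h t) ?\<tau>'"
    using bif_stop_antimono[of A H h _ ?\<tau>'] by fastforce
  then show False
  proof cases
    case 1
    then show False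
      using step bifurcate_step[of t] unfolding bif_stop_def by simp
  next
    case 2
    then show False using not_bif_stop_before by blast
  qed
qed

lemma run_bifurcate_subset:
  "run (bifurcate A H) h t \<subseteq> run A h (bif_time A H h (run (bifurcate A H) h t))"
proof (induction t)
  case 0
  then show ?case by simp
next
  case (Suc t)
  show ?case
  proof (cases "bifurcate A H (run (bifurcate A H) h t)")
    case None
    then show ?thesis using Suc by simp
  next
    case (Some x)
    let ?\<tau> = "bif_time A H h (run (bifurcate A H) h t)"
    have "(x, h x) \<in> run A h (Suc ?\<tau>)"
      using Some bifurcate_step[of t] by simp
    moreover have "run A h ?\<tau> \<subseteq> run A h (Suc ?\<tau>)"
      by (rule run_mono) simp
    moreover have "run A h (Suc ?\<tau>) \<subseteq> run A h (bif_time A H h (run (bifurcate A H) h (Suc t)))"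
      by (rule run_mono) (use bif_time_increasing[OF Some] in simp)
    ultimately show ?thesis
      using Suc Some by auto
  qed
qed

lemma terminates_bifurcate: "terminates (bifurcate A H) h"
proof (rule ccontr)
  assume "\<not> terminates (bifurcate A H) h"
  then have "\<And>t. \<exists>x. bifurcate A H (run (bifurcate A H) h t) = Some x"
    unfolding terminates_def by auto
  then have "strict_mono (\<lambda>t. bif_time A H h (run (bifurcate A H) h t))"
    using bif_time_increasing unfolding strict_mono_Suc_iff by blast
  then have "t \<le> bif_time A H h (run (bifurcate A H) h t)" for t
    by (rule strict_mono_imp_increasing)
  moreover obtain t0 where "A (run A h t0) = None"
    using terminates_A unfolding terminates_def by blast
  ultimately show False
    using bif_time_le_termination[of A h t0 H] by (metis Suc_n_not_le_n le_trans)
qed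

lemma final_bifurcate_run:
  obtains t where "final (bifurcate A H) h = run (bifurcate A H) h t"
    and "final A h = run A h (bif_time A H h (run (bifurcate A H) h t))"
proof -
  obtain t where "bifurcate A H (run (bifurcate A H) h t) = None"
    using terminates_bifurcate unfolding terminates_def by blast
  then show ?thesis
    using that final_eq_run bifurcate_step[of t] by metis
qed

lemma final_bifurcate_subset: "final (bifurcate A H) h \<subseteq> final A h"
  using final_bifurcate_run run_bifurcate_subset by metis

lemma version_space_final_bifurcate:
  "version_space H (final (bifurcate A H) h) = version_space H (final A h)"
proof
  show "version_space H (final A h) \<subseteq> version_space H (final (bifurcate A H) h)"
    using version_space_antimono[OF final_bifurcate_subset] .
next
  obtain t where B_final: "final (bifurcate A H) h = run (bifurcate A H) h t"
    and A_final: "final A h = run A h (bif_time A H h (run (bifurcate A H) h t))"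
    by (rule final_bifurcate_run)
  show "version_space H (final (bifurcate A H) h) \<subseteq> version_space H (final A h)"
  proof
    fix h' assume h': "h' \<in> version_space H (final (bifurcate A H) h)"
    then have "h' \<in> H" unfolding version_space_def by simp
    moreover have "run A h' (bif_time A H h (run (bifurcate A H) h t)) = final A h"
      using run_eq_before_bif_time[OF in_version_space_run[OF h_in_H] h'[unfolded B_final]] A_final
      by simp
    ultimately show "h' \<in> version_space H (final A h)"
      by (metis in_version_space_run)
  qed
qed

lemma bifurcate_informative:
  assumes "bifurcate A H (run (bifurcate A H) h t) = Some x"
  shows "2 \<le> card (resp_set H x (run (bifurcate A H) h t))"
proof -
  let ?\<tau> = "bif_time A H h (run (bifurcate A H) h t)"
  have "2 \<le> card (resp_set H x (run A h ?\<tau>))"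
    using bif_stop_bif_time[OF terminates_A, of H "run (bifurcate A H) h t"] assms bifurcate_step[of t]
    unfolding bif_stop_def by simp
  also have "\<dots> \<le> card (resp_set H x (run (bifurcate A H) h t))"
    using resp_set_antimono[OF run_bifurcate_subset] by (intro card_mono) auto
  finally show ?thesis .
qed

end

lemma achieves_if_same_version_space:
  assumes "learning_objective f H" "achieves f Q H A"
    and "\<And>h. h \<in> H \<Longrightarrow> terminates B h \<and> version_space H (final B h) = version_space H (final A h)"
  shows "achieves f Q H B"
proof -
  obtain g where "\<forall>S. f S = g (version_space H S)"
    using assms(1) unfolding learning_objective_def by blast
  then show ?thesis
    using assms(2,3) unfolding achieves_def by metis
qed

lemma alg_cost_mono:
  fixes A B :: "('x::finite, 'y::finite) alg"
  assumes "\<forall>x y. c x y \<ge> 0"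
    and "\<And>h. h \<in> H \<Longrightarrow> final B h \<subseteq> final A h"
  shows "alg_cost c H B \<le> alg_cost c H A"
proof (cases "H = {}")
  case False
  have cost_le: "cost_set c (final B h) \<le> cost_set c (final A h)" if "h \<in> H" for h
    unfolding cost_set_def using assms(1) assms(2)[OF that] by (intro sum_mono2) auto
  then show ?thesis
    unfolding alg_cost_def using False
    by (auto simp: Max_le_iff intro!: order_trans[OF cost_le Max_ge])
qed (simp add: alg_cost_def)

theorem lemma1:
  fixes H :: "('x::finite \<Rightarrow> 'y::finite) set"
    and c :: "'x \<Rightarrow> 'y \<Rightarrow> real"
    and f :: "('x \<times> 'y) set \<Rightarrow> real"
    and Q :: real
  assumes "\<forall>x y. c x y \<ge> 0"
    and "Q > 0"
    and "\<forall>S. f S \<ge> 0"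
    and "learning_objective f H"
    and "\<exists>A. optimal_alg c f Q H A"
  shows "\<exists>A. optimal_alg c f Q H A \<and> bifurcating H A"
proof -
  obtain A where A: "optimal_alg c f Q H A"
    using assms(5) by blast
  then have achieves_A: "achieves f Q H A"
    unfolding optimal_alg_def by simp
  have terminates_A: "terminates A h" if "h \<in> H" for h
    using achieves_A that unfolding achieves_def by blast
  have "achieves f Q H (bifurcate A H)"
    by (rule achieves_if_same_version_space[OF assms(4) achieves_A])
      (simp add: terminates_bifurcate version_space_final_bifurcate terminates_A)
  moreover have "alg_cost c H (bifurcate A H) \<le> alg_cost c H A"
    by (rule alg_cost_mono[OF assms(1)]) (simp add: final_bifurcate_subset terminates_A)
  moreover have "bifurcating H (bifurcate A H)"
    unfolding bifurcating_def by (simp add: bifurcate_informative terminates_A)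
  ultimately show ?thesis
    using A unfolding optimal_alg_def by (meson order_trans)
qed

end
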